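(* Let $F(V)$ be the set of formulas of $\mathrm{q}\L^{*}$ and let $\sim$ be the relation on $F(V)$ given by $p\sim q$ iff $\vdash p\leftrightarrow q$. Then $[\mathbf{F}(\mathbf{V})]_\sim=\langle [F(V)]_\sim;\to,\neg,{}^{+},{}^{-},[1]_\sim\rangle$, with $\neg[p]_\sim=[\neg p]_\sim$, $[p]_\sim\to[q]_\sim=[p\to q]_\sim$, $([p]_\sim)^{+}=[p^{+}]_\sim$, $([p]_\sim)^{-}=[p^{-}]_\sim$, is a quasi-Wajsberg* algebra.
   Context: Let $V=\{p_1,p_2,\ldots\}$ be a set of propositional variables and $F(V)$ the set of formulas built from $V$ and the constant $1$ with the binary connective $\to$ and the unary connectives $\neg$, ${}^{+}$, ${}^{-}$ (postfix ${}^+,{}^-$ bind tighter than $\neg$, which binds tighter than $\to$). Abbreviations: $p\vee q:=((p^{+}\to q^{+})^{+}\to(\neg p)^{-})\to((q^{-}\to p^{-})^{-}\to p^{-})$; $A\leftrightarrow B$ as an axiom stands for the two axioms $A\to B$ and $B\to A$, and $\vdash A\leftrightarrow B$ means $\vdash A\to B$ and $\vdash B\to A$. Axiom schemas of $\mathrm{q}\L^{*}$ (for all formulas $p,q,r$): (Q1) $(p\to q)\leftrightarrow(\neg q\to\neg p)$; (Q2) $1\leftrightarrow((1\to p)\to 1)$; (Q3) $p\leftrightarrow((q\to q)\to p)$; (Q4) $(p\to q)\leftrightarrow((q^{+}\to p^{-})\to(p^{+}\to q^{-}))$; (Q5) $\neg(p\to q)\leftrightarrow(q\to p)$; (Q6)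 $(p\to(\neg p\to q))^{+}\leftrightarrow(p^{+}\to(\neg p^{+}\to q^{+}))$; (Q7) $(p\to(q\vee r))\leftrightarrow((p\to r)\vee(p\to q))$; (Q8) $(p\vee(q\vee r))\leftrightarrow((p\vee q)\vee r)$; (Q9) $((p\to 1)\to((q\to 1)\to r))\to((q\to 1)\to((p\to 1)\to r))$; (Q10) $p\to 1$; (Q11) $((1\to 1)\to p^{+})\leftrightarrow((p\to 1)\to 1)$ and $((1\to 1)\to p^{-})\leftrightarrow((p\to\neg 1)\to\neg 1)$. Deduction rules: (R1) from $p$ and $p\to q$ infer $(r\to r)\to q$; (R2) from $(r\to r)\to(p\to q)$ infer $p\to q$; (R3) from $p\to q$ and $r\to t$ infer $(q\to r)\to(p\to t)$. $\vdash q$ means $q$ has a proof (finite sequence of axioms and rule applications ending in $q$). The relation $\sim$ is a congruence for $\to,\neg,{}^+,{}^-$, so the operations on classes $[p]_\sim$ are well defined. A quasi-Wajsberg* algebra is an algebra $\langle W;\to,\neg,{}^{+},{}^{-},1\rangle$ of type $\langle2,1,1,1,0\rangle$ such that for all $x,y,z\in W$: (QW*1) $x\to y=\neg y\to\neg x$; (QW*2) $(x\to 1)\to((y\to 1)\to z)=(y\to 1)\to((x\to 1)\to z)$; (QW*3) $(1\to x)\to 1=1$; (QW*4) $(z\to z)\to(x\to y)=x\to y$; (QW*5) $(1\to 1)\to x^{+}=((1\to 1)\to x)^{+}=(x\to 1)\to 1$ and $(1\to 1)\to x^{-}=((1\to 1)\to x)^{-}=(x\to\neg 1)\to\neg 1$;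 (QW*6) $x\to y=(y^{+}\to x^{-})\to(x^{+}\to y^{-})$; (QW*7) $\neg(x\to y)=y\to x$; (QW*8) $\neg\neg x=x$; (QW*9) $(x\to(\neg x\to y))^{+}=x^{+}\to(\neg x^{+}\to y^{+})$; (QW*10) $x\vee y=y\vee x$; (QW*11) $x\vee(y\vee z)=(x\vee y)\vee z$; (QW*12) $x\to(y\vee z)=(x\to y)\vee(x\to z)$; where $x\vee y:=((x^{+}\to y^{+})^{+}\to(\neg x)^{-})\to((y^{-}\to x^{-})^{-}\to x^{-})$. *)

theory Defs
  imports Main
begin

datatype form = Var nat | One | Imp form form | Neg form | Pls form | Mns form

definition fjoin :: "form \<Rightarrow> form \<Rightarrow> form" where
  "fjoin p q = Imp (Imp (Pls (Imp (Pls p) (Pls q))) (Mns (Neg p)))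
                   (Imp (Mns (Imp (Mns q) (Mns p))) (Mns p))"

text \<open>Provability in qL* (axioms Q1--Q11, each biconditional giving two axioms; rules R1--R3).\<close>
inductive prov :: "form \<Rightarrow> bool" where
  Q1a: "prov (Imp (Imp p q) (Imp (Neg q) (Neg p)))"
| Q1b: "prov (Imp (Imp (Neg q) (Neg p)) (Imp p q))"
| Q2a: "prov (Imp One (Imp (Imp One p) One))"
| Q2b: "prov (Imp (Imp (Imp One p) One) One)"
| Q3a: "prov (Imp p (Imp (Imp q q) p))"
| Q3b: "prov (Imp (Imp (Imp q q) p) p)"
| Q4a: "prov (Imp (Imp p q) (Imp (Imp (Pls q) (Mns p)) (Imp (Pls p) (Mns q))))"
| Q4b: "prov (Imp (Imp (Imp (Pls q) (Mns p)) (Imp (Pls p) (Mns q))) (Imp p q))"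
| Q5a: "prov (Imp (Neg (Imp p q)) (Imp q p))"
| Q5b: "prov (Imp (Imp q p) (Neg (Imp p q)))"
| Q6a: "prov (Imp (Pls (Imp p (Imp (Neg p) q))) (Imp (Pls p) (Imp (Neg (Pls p)) (Pls q))))"
| Q6b: "prov (Imp (Imp (Pls p) (Imp (Neg (Pls p)) (Pls q))) (Pls (Imp p (Imp (Neg p) q))))"
| Q7a: "prov (Imp (Imp p (fjoin q r)) (fjoin (Imp p r) (Imp p q)))"
| Q7b: "prov (Imp (fjoin (Imp p r) (Imp p q)) (Imp p (fjoin q r)))"
| Q8a: "prov (Imp (fjoin p (fjoin q r)) (fjoin (fjoin p q) r))"
| Q8b: "prov (Imp (fjoin (fjoin p q) r) (fjoin p (fjoin q r)))"
| Q9: "prov (Imp (Imp (Imp p One) (Imp (Imp q One) r)) (Imp (Imp q One) (Imp (Imp p One) r)))"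
| Q10: "prov (Imp p One)"
| Q11a: "prov (Imp (Imp (Imp One One) (Pls p)) (Imp (Imp p One) One))"
| Q11b: "prov (Imp (Imp (Imp p One) One) (Imp (Imp One One) (Pls p)))"
| Q11c: "prov (Imp (Imp (Imp One One) (Mns p)) (Imp (Imp p (Neg One)) (Neg One)))"
| Q11d: "prov (Imp (Imp (Imp p (Neg One)) (Neg One)) (Imp (Imp One One) (Mns p)))"
| R1: "prov p \<Longrightarrow> prov (Imp p q) \<Longrightarrow> prov (Imp (Imp r r) q)"
| R2: "prov (Imp (Imp r r) (Imp p q)) \<Longrightarrow> prov (Imp p q)"
| R3: "prov (Imp p q) \<Longrightarrow> prov (Imp r t) \<Longrightarrow> prov (Imp (Imp q r) (Imp p t))"

definition simrel :: "form rel" where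
  "simrel = {(p, q). prov (Imp p q) \<and> prov (Imp q p)}"

definition cls :: "form \<Rightarrow> form set" where
  "cls p = simrel `` {p}"

definition imp_c :: "form set \<Rightarrow> form set \<Rightarrow> form set" where
  "imp_c X Y = cls (Imp (SOME p. p \<in> X) (SOME q. q \<in> Y))"
definition neg_c :: "form set \<Rightarrow> form set" where
  "neg_c X = cls (Neg (SOME p. p \<in> X))"
definition pls_c :: "form set \<Rightarrow> form set" where
  "pls_c X = cls (Pls (SOME p. p \<in> X))"
definition mns_c :: "form set \<Rightarrow> form set" where
  "mns_c X = cls (Mns (SOME p. p \<in> X))"

definition qw_join :: "('a \<Rightarrow> 'a \<Rightarrow> 'a) \<Rightarrow> ('a \<Rightarrow> 'a) \<Rightarrow> ('a \<Rightarrow> 'a) \<Rightarrow> ('a \<Rightarrow> 'a) \<Rightarrow> 'a \<Rightarrow> 'a \<Rightarrow> 'a" where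
  "qw_join imp neg pl mn x y =
     imp (imp (pl (imp (pl x) (pl y))) (mn (neg x))) (imp (mn (imp (mn y) (mn x))) (mn x))"

definition qw_star_algebra ::
  "'a set \<Rightarrow> ('a \<Rightarrow> 'a \<Rightarrow> 'a) \<Rightarrow> ('a \<Rightarrow> 'a) \<Rightarrow> ('a \<Rightarrow> 'a) \<Rightarrow> ('a \<Rightarrow> 'a) \<Rightarrow> 'a \<Rightarrow> bool" where
  "qw_star_algebra W imp neg pl mn one \<longleftrightarrow>
    one \<in> W \<and>
    (\<forall>x\<in>W. \<forall>y\<in>W. imp x y \<in> W) \<and>
    (\<forall>x\<in>W. neg x \<in> W \<and> pl x \<in> W \<and> mn x \<in> W) \<and>
    (\<forall>x\<in>W. \<forall>y\<in>W. \<forall>z\<in>W.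
      (let join = qw_join imp neg pl mn in
       imp x y = imp (neg y) (neg x) \<and>
       imp (imp x one) (imp (imp y one) z) = imp (imp y one) (imp (imp x one) z) \<and>
       imp (imp one x) one = one \<and>
       imp (imp z z) (imp x y) = imp x y \<and>
       imp (imp one one) (pl x) = pl (imp (imp one one) x) \<and>
       pl (imp (imp one one) x) = imp (imp x one) one \<and>
       imp (imp one one) (mn x) = mn (imp (imp one one) x) \<and>
       mn (imp (imp one one) x) = imp (imp x (neg one)) (neg one) \<and>
       imp x y = imp (imp (pl y) (mn x)) (imp (pl x) (mn y)) \<and>
       neg (imp x y) = imp y x \<and>
       neg (neg x) = x \<and>
       pl (imp x (imp (neg x) y)) = imp (pl x) (imp (neg (pl x)) (pl y)) \<and>
       join x y = join y x \<and>
       join x (join y z) = join (join x y) z \<and>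
       imp x (join y z) = join (imp x y) (imp x z)))"

end

theory Submission
  imports Defs
begin

text \<open>Rule R3 makes implication antitone in its first and monotone in its second argument, Q1
  makes negation antitone, and Q11 shows that \<open>p\<^sup>+\<close> and \<open>p\<^sup>-\<close> are interderivable with formulas
  built from \<open>p\<close> by implication and negation alone; so interderivability is a congruence and the
  operations on classes are well defined. Each identity of a quasi-Wajsberg* algebra is then
  the class form of one of the biconditional axioms Q1--Q9, up to discarding a prefix
  \<open>(q \<rightarrow> q) \<rightarrow>\<close> with Q3; double negation comes from applying Q5 twice and commutativity of
  the join from Q7 with \<open>p = 1 \<rightarrow> 1\<close>.\<close>

abbreviation interderivable :: "form \<Rightarrow> form \<Rightarrow> bool" (infix "\<approx>" 50) where
  "p \<approx> q \<equiv> (p, q) \<in> simrel"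

lemma interderivable_iff: "p \<approx> q \<longleftrightarrow> prov (Imp p q) \<and> prov (Imp q p)"
  by (simp add: simrel_def)

lemma prov_trans: "prov (Imp p q) \<Longrightarrow> prov (Imp q r) \<Longrightarrow> prov (Imp p r)"
  using R3[of p q q r] R2 by blast

lemma prov_Imp_refl: "prov (Imp p p)"
  using prov_trans[OF Q3a[of p One] Q3b[of One p]] .

lemma prov_mp_Imp: "prov p \<Longrightarrow> prov (Imp p (Imp q r)) \<Longrightarrow> prov (Imp q r)"
  using R1 R2 by blast

lemma simrel_refl: "p \<approx> p"
  by (simp add: interderivable_iff prov_Imp_refl)

lemma simrel_sym: "p \<approx> q \<Longrightarrow> q \<approx> p"
  by (simp add: interderivable_iff)

lemma simrel_trans [trans]: "p \<approx> q \<Longrightarrow> q \<approx> r \<Longrightarrow> p \<approx> r"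
  unfolding interderivable_iff using prov_trans by blast

lemma equiv_simrel: "equiv UNIV simrel"
  by (intro equivI refl_onI symI transI) (auto intro: simrel_refl simrel_sym simrel_trans)

lemma simrel_Imp: "p \<approx> p' \<Longrightarrow> q \<approx> q' \<Longrightarrow> Imp p q \<approx> Imp p' q'"
  unfolding interderivable_iff using R3 by blast

lemma simrel_Neg: "p \<approx> q \<Longrightarrow> Neg p \<approx> Neg q"
  unfolding interderivable_iff using prov_mp_Imp Q1a by blast

lemma simrel_Imp_Imp_self: "Imp (Imp q q) p \<approx> p"
  by (simp add: interderivable_iff Q3a Q3b)

lemma simrel_Pls_unfold: "Pls p \<approx> Imp (Imp p One) One"
proof -
  have "Imp (Imp One One) (Pls p) \<approx> Imp (Imp p One) One"
    by (simp add: interderivable_iff Q11a Q11b)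
  then show ?thesis
    using simrel_Imp_Imp_self simrel_sym simrel_trans by blast
qed

lemma simrel_Mns_unfold: "Mns p \<approx> Imp (Imp p (Neg One)) (Neg One)"
proof -
  have "Imp (Imp One One) (Mns p) \<approx> Imp (Imp p (Neg One)) (Neg One)"
    by (simp add: interderivable_iff Q11c Q11d)
  then show ?thesis
    using simrel_Imp_Imp_self simrel_sym simrel_trans by blast
qed

lemma simrel_Pls: "p \<approx> q \<Longrightarrow> Pls p \<approx> Pls q"
  by (meson simrel_Imp simrel_Pls_unfold simrel_refl simrel_sym simrel_trans)

lemma simrel_Mns: "p \<approx> q \<Longrightarrow> Mns p \<approx> Mns q"
  by (meson simrel_Imp simrel_Mns_unfold simrel_refl simrel_sym simrel_trans)

lemma simrel_fjoin: "p \<approx> p' \<Longrightarrow> q \<approx> q' \<Longrightarrow> fjoin p q \<approx> fjoin p' q'"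
  unfolding fjoin_def by (intro simrel_Imp simrel_Pls simrel_Mns simrel_Neg)

lemma simrel_Neg_Neg: "Neg (Neg p) \<approx> p"
proof -
  let ?t = "Imp One One"
  have "Neg (Neg p) \<approx> Neg (Neg (Imp ?t p))"
    by (intro simrel_Neg simrel_sym[OF simrel_Imp_Imp_self])
  also have "Neg (Neg (Imp ?t p)) \<approx> Neg (Imp p ?t)"
    by (intro simrel_Neg) (simp add: interderivable_iff Q5a Q5b)
  also have "Neg (Imp p ?t) \<approx> Imp ?t p"
    by (simp add: interderivable_iff Q5a Q5b)
  also have "Imp ?t p \<approx> p"
    by (rule simrel_Imp_Imp_self)
  finally show ?thesis .
qed

lemma simrel_fjoin_commute: "fjoin p q \<approx> fjoin q p"
proof -
  let ?t = "Imp One One"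
  have "fjoin p q \<approx> Imp ?t (fjoin p q)"
    by (rule simrel_sym[OF simrel_Imp_Imp_self])
  also have "Imp ?t (fjoin p q) \<approx> fjoin (Imp ?t q) (Imp ?t p)"
    by (simp add: interderivable_iff Q7a Q7b)
  also have "fjoin (Imp ?t q) (Imp ?t p) \<approx> fjoin q p"
    by (intro simrel_fjoin simrel_Imp_Imp_self)
  finally show ?thesis .
qed

lemma cls_eq_iff: "cls p = cls q \<longleftrightarrow> p \<approx> q"
  unfolding cls_def using eq_equiv_class_iff[OF equiv_simrel] by blast

lemma quotient_simrel_eq_range_cls: "UNIV // simrel = range cls"
  by (auto simp: quotient_def cls_def)

lemma some_in_cls: "(SOME q. q \<in> cls p) \<approx> p"
proof -
  have "p \<in> cls p"
    by (simp add: cls_def simrel_refl)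
  then have "(SOME q. q \<in> cls p) \<in> cls p"
    by (rule someI)
  then show ?thesis
    by (simp add: cls_def simrel_sym)
qed

lemma imp_c_cls [simp]: "imp_c (cls p) (cls q) = cls (Imp p q)"
  unfolding imp_c_def cls_eq_iff by (intro simrel_Imp some_in_cls)

lemma neg_c_cls [simp]: "neg_c (cls p) = cls (Neg p)"
  unfolding neg_c_def cls_eq_iff by (intro simrel_Neg some_in_cls)

lemma pls_c_cls [simp]: "pls_c (cls p) = cls (Pls p)"
  unfolding pls_c_def cls_eq_iff by (intro simrel_Pls some_in_cls)

lemma mns_c_cls [simp]: "mns_c (cls p) = cls (Mns p)"
  unfolding mns_c_def cls_eq_iff by (intro simrel_Mns some_in_cls)

lemma qw_join_cls [simp]: "qw_join imp_c neg_c pls_c mns_c (cls p) (cls q) = cls (fjoin p q)"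
  by (simp add: qw_join_def fjoin_def)

lemma qw_star_identities_simrel:
  fixes x y z :: form
  defines "t \<equiv> Imp One One"
  shows "Imp x y \<approx> Imp (Neg y) (Neg x)"
    and "Imp (Imp x One) (Imp (Imp y One) z) \<approx> Imp (Imp y One) (Imp (Imp x One) z)"
    and "Imp (Imp One x) One \<approx> One"
    and "Imp (Imp z z) (Imp x y) \<approx> Imp x y"
    and "Imp t (Pls x) \<approx> Pls (Imp t x)"
    and "Pls (Imp t x) \<approx> Imp (Imp x One) One"
    and "Imp t (Mns x) \<approx> Mns (Imp t x)"
    and "Mns (Imp t x) \<approx> Imp (Imp x (Neg One)) (Neg One)"
    and "Imp x y \<approx> Imp (Imp (Pls y) (Mns x)) (Imp (Pls x) (Mns y))"
    and "Neg (Imp x y) \<approx> Imp y x"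
    and "Neg (Neg x) \<approx> x"
    and "Pls (Imp x (Imp (Neg x) y)) \<approx> Imp (Pls x) (Imp (Neg (Pls x)) (Pls y))"
    and "fjoin x y \<approx> fjoin y x"
    and "fjoin x (fjoin y z) \<approx> fjoin (fjoin x y) z"
    and "Imp x (fjoin y z) \<approx> fjoin (Imp x y) (Imp x z)"
proof -
  have Pls_t: "Pls (Imp t x) \<approx> Pls x" and Mns_t: "Mns (Imp t x) \<approx> Mns x"
    unfolding t_def by (intro simrel_Pls simrel_Mns simrel_Imp_Imp_self)+
  show "Imp t (Pls x) \<approx> Pls (Imp t x)" "Imp t (Mns x) \<approx> Mns (Imp t x)"
    using Pls_t Mns_t unfolding t_def by (meson simrel_Imp_Imp_self simrel_sym simrel_trans)+
  show "Pls (Imp t x) \<approx> Imp (Imp x One) One"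
    by (rule simrel_trans[OF Pls_t simrel_Pls_unfold])
  show "Mns (Imp t x) \<approx> Imp (Imp x (Neg One)) (Neg One)"
    by (rule simrel_trans[OF Mns_t simrel_Mns_unfold])
  have "Imp x (fjoin y z) \<approx> fjoin (Imp x z) (Imp x y)"
    by (simp add: interderivable_iff Q7a Q7b)
  also have "fjoin (Imp x z) (Imp x y) \<approx> fjoin (Imp x y) (Imp x z)"
    by (rule simrel_fjoin_commute)
  finally show "Imp x (fjoin y z) \<approx> fjoin (Imp x y) (Imp x z)" .
  show "Neg (Neg x) \<approx> x" "fjoin x y \<approx> fjoin y x"
    by (rule simrel_Neg_Neg simrel_fjoin_commute)+
qed (simp_all add: interderivable_iff Q1a Q1b Q2a Q2b Q3a Q3b Q4a Q4b Q5a Q5b Q6a Q6b Q8a Q8b Q9)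

theorem proposition5p3:
  shows "qw_star_algebra (UNIV // simrel) imp_c neg_c pls_c mns_c (cls One)"
  unfolding qw_star_algebra_def quotient_simrel_eq_range_cls Let_def
  by (auto simp: cls_eq_iff qw_star_identities_simrel)

end
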